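(* Let $G=(V,E)$ be a $k$-cozy graph with edge connectivity $\kappa'(G)=2\ell$. Let $D\subset E$ with $|D|=2\ell$ be a set of edges whose removal disconnects $G$ into two components $G_1$ and $G_2$. Then $\kappa'(G_1)\ge\ell$ and $\kappa'(G_2)\ge\ell$.
   Context: An undirected graph $G$ is $k$-cozy if it is connected, $k$-regular, and equipped with a $1$-factorization, i.e., an assignment of colors from $\{1,\dots,k\}$ to its edges such that the $k$ edges incident at each vertex receive distinct colors. The edge connectivity $\kappa'(H)$ of a graph $H$ is the minimum number of edges whose removal disconnects $H$. *)

theory Defs
  imports Main "HOL-Library.Extended_Nat"
begin

definition graph :: "'a set \<Rightarrow> 'a set set \<Rightarrow> bool" where
  "graph V E \<longleftrightarrow> finite V \<and> (\<forall>e\<in>E. \<exists>u v. e = {u, v} \<and> u \<noteq> v \<and> u \<in> V \<and> v \<in> V)"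

definition adj :: "'a set set \<Rightarrow> 'a \<Rightarrow> 'a \<Rightarrow> bool" where
  "adj E u v \<longleftrightarrow> {u, v} \<in> E \<and> u \<noteq> v"

definition connected_graph :: "'a set \<Rightarrow> 'a set set \<Rightarrow> bool" where
  "connected_graph V E \<longleftrightarrow> V \<noteq> {} \<and>
     (\<forall>u\<in>V. \<forall>v\<in>V. (u, v) \<in> {(x, y). adj E x y}\<^sup>*)"

definition degree :: "'a set set \<Rightarrow> 'a \<Rightarrow> nat" where
  "degree E v = card {e \<in> E. v \<in> e}"

definition regular :: "nat \<Rightarrow> 'a set \<Rightarrow> 'a set set \<Rightarrow> bool" where
  "regular k V E \<longleftrightarrow> (\<forall>v\<in>V. degree E v = k)"

definition one_factorization :: "nat \<Rightarrow> 'a set \<Rightarrow> 'a set set \<Rightarrow> ('a set \<Rightarrow> nat) \<Rightarrow> bool" where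
  "one_factorization k V E c \<longleftrightarrow> (\<forall>e\<in>E. c e \<in> {1..k}) \<and>
     (\<forall>v\<in>V. inj_on c {e \<in> E. v \<in> e})"

definition cozy :: "nat \<Rightarrow> 'a set \<Rightarrow> 'a set set \<Rightarrow> bool" where
  "cozy k V E \<longleftrightarrow> graph V E \<and> connected_graph V E \<and> regular k V E \<and>
     (\<exists>c. one_factorization k V E c)"

text \<open>Edge connectivity: minimum number of edges whose removal disconnects the graph
 (infinite if no edge set disconnects it, e.g. a single vertex).\<close>
definition edge_connectivity :: "'a set \<Rightarrow> 'a set set \<Rightarrow> enat" where
  "edge_connectivity V E = (INF F \<in> {F. F \<subseteq> E \<and> \<not> connected_graph V (E - F)}. enat (card F))"

end

theory Submission
  imports Defs
begin

text \<open>Let \<open>F\<close> be a set of edges of \<open>G\<^sub>1\<close> whose removal disconnects it, splitting \<open>V\<^sub>1\<close> into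
  \<open>A\<close> and \<open>B\<close>. Since \<open>D\<close> is a minimum cut, \<open>D\<close> is exactly the set of edges leaving \<open>V\<^sub>1\<close>,
  so every edge of \<open>D\<close> has one end outside \<open>V\<^sub>1\<close> and hence meets at most one of \<open>A\<close>, \<open>B\<close>.
  The edges leaving \<open>A\<close> in \<open>G\<close> lie in \<open>F\<close> together with the edges of \<open>D\<close> meeting \<open>A\<close>, and
  likewise for \<open>B\<close>. Both of these cuts have at least \<open>2\<ell>\<close> edges, so
  \<open>4\<ell> \<le> 2|F| + |D| = 2|F| + 2\<ell>\<close>, i.e. \<open>|F| \<ge> \<ell>\<close>.\<close>

definition boundary :: "'a set set \<Rightarrow> 'a set \<Rightarrow> 'a set set" where
  "boundary E S = {e \<in> E. e \<inter> S \<noteq> {} \<and> e - S \<noteq> {}}"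

lemma boundary_subset: "boundary E S \<subseteq> E"
  unfolding boundary_def by blast

lemma graph_edge_subset: "graph V E \<Longrightarrow> e \<in> E \<Longrightarrow> e \<subseteq> V"
  unfolding graph_def by auto

lemma graph_finite_edges:
  assumes "graph V E"
  shows "finite E"
proof -
  have "E \<subseteq> Pow V" using graph_edge_subset[OF assms] by blast
  moreover have "finite V" using assms unfolding graph_def by blast
  ultimately show ?thesis by (meson finite_Pow_iff finite_subset)
qed

lemma graph_subgraph:
  assumes "graph V E" "V' \<subseteq> V" "\<forall>e\<in>E'. e \<in> E \<and> e \<subseteq> V'"
  shows "graph V' E'"
  unfolding graph_def
proof
  have "finite V" using assms(1) by (simp add: graph_def)
  then show "finite V'" using assms(2) by (rule finite_subset[rotated])
  show "\<forall>e\<in>E'. \<exists>u v. e = {u, v} \<and> u \<noteq> v \<and> u \<in> V' \<and> v \<in> V'"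
  proof
    fix e assume e: "e \<in> E'"
    then have "e \<in> E" "e \<subseteq> V'" using assms(3) by auto
    moreover obtain u v where "e = {u, v}" "u \<noteq> v"
      using assms(1) \<open>e \<in> E\<close> by (auto simp: graph_def)
    ultimately show "\<exists>u v. e = {u, v} \<and> u \<noteq> v \<and> u \<in> V' \<and> v \<in> V'" by auto
  qed
qed

lemma boundary_complement:
  assumes "\<forall>e\<in>E. e \<subseteq> V"
  shows "boundary E (V - S) = boundary E S"
  using assms unfolding boundary_def by blast

lemma not_connected_Diff_boundary:
  assumes "S \<subseteq> V" "S \<noteq> {}" "S \<noteq> V"
  shows "\<not> connected_graph V (E - boundary E S)"
proof
  assume conn: "connected_graph V (E - boundary E S)"
  obtain u v where u: "u \<in> S" and v: "v \<in> V" "v \<notin> S" using assms by blast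
  have "(u, v) \<in> {(x, y). adj (E - boundary E S) x y}\<^sup>*"
    using conn u v assms(1) unfolding connected_graph_def by blast
  then have "v \<in> S"
    by (induction rule: rtrancl_induct) (use u in \<open>auto simp: adj_def boundary_def\<close>)
  with v show False by blast
qed

text \<open>Witness: the connected component of a vertex.\<close>
lemma not_connected_graph_obtains_closed_set:
  assumes "graph V E" "V \<noteq> {}" "\<not> connected_graph V E"
  obtains A where "A \<subseteq> V" "A \<noteq> {}" "A \<noteq> V" "boundary E A = {}"
proof -
  let ?R = "{(x, y). adj E x y}"
  obtain u v where uv: "u \<in> V" "v \<in> V" "(u, v) \<notin> ?R\<^sup>*"
    using assms(2,3) unfolding connected_graph_def by blast
  define A where "A = {x \<in> V. (u, x) \<in> ?R\<^sup>*}"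
  have "boundary E A = {}"
  proof (rule ccontr)
    assume "boundary E A \<noteq> {}"
    then obtain e x y where e: "e \<in> E" "x \<in> e" "x \<in> A" "y \<in> e" "y \<notin> A"
      unfolding boundary_def by blast
    then obtain p q where "e = {p, q}" "p \<noteq> q" using assms(1) unfolding graph_def by blast
    with e have "adj E x y" "y \<in> V"
      using graph_edge_subset[OF assms(1)] by (auto simp: adj_def insert_commute)
    with e show False unfolding A_def by (auto intro: rtrancl_into_rtrancl)
  qed
  moreover have "u \<in> A" "v \<notin> A" using uv unfolding A_def by auto
  moreover have "A \<subseteq> V" unfolding A_def by blast
  ultimately show ?thesis using that uv(2) by blast
qed

lemma edge_connectivity_le_card:
  assumes "X \<subseteq> E" "\<not> connected_graph V (E - X)"
  shows "edge_connectivity V E \<le> enat (card X)"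
  unfolding edge_connectivity_def by (rule INF_lower) (use assms in auto)

lemma le_edge_connectivityI:
  assumes "\<And>F. F \<subseteq> E \<Longrightarrow> \<not> connected_graph V (E - F) \<Longrightarrow> m \<le> card F"
  shows "enat m \<le> edge_connectivity V E"
  unfolding edge_connectivity_def by (rule INF_greatest) (use assms in auto)

lemma le_card_boundary:
  assumes "edge_connectivity V E = enat m" "S \<subseteq> V" "S \<noteq> {}" "S \<noteq> V"
  shows "m \<le> card (boundary E S)"
  using edge_connectivity_le_card[OF boundary_subset[of E S] not_connected_Diff_boundary[OF assms(2-4)]]
  by (simp add: assms(1))

text \<open>An edge has only two ends, so it cannot meet \<open>A\<close>, \<open>B\<close> and the complement of \<open>A \<union> B\<close>.\<close>
lemma boundary_Int_boundary_Int_boundary_Un: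
  assumes "graph V E" "A \<inter> B = {}"
  shows "boundary E A \<inter> boundary E B \<inter> boundary E (A \<union> B) = {}"
proof -
  have False if "e \<in> E" "x \<in> e" "x \<in> A" "y \<in> e" "y \<in> B" "z \<in> e" "z \<notin> A \<union> B" for e x y z
  proof -
    obtain p q where "e = {p, q}" using \<open>e \<in> E\<close> assms(1) unfolding graph_def by blast
    moreover have "x \<noteq> y" "x \<noteq> z" "y \<noteq> z" using that assms(2) by auto
    ultimately show False using that by auto
  qed
  then show ?thesis unfolding boundary_def by blast
qed

lemma minimum_cut_eq_boundary:
  assumes "graph V E" "edge_connectivity V E = enat (card D)" "D \<subseteq> E"
    and "S \<subseteq> V" "S \<noteq> {}" "S \<noteq> V" "\<forall>e \<in> E - D. e \<subseteq> S \<or> e \<inter> S = {}"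
  shows "D = boundary E S"
proof -
  have finD: "finite D" using assms(3) graph_finite_edges[OF assms(1)] by (rule finite_subset)
  have sub: "boundary E S \<subseteq> D" using assms(7) unfolding boundary_def by blast
  have "card D \<le> card (boundary E S)" using le_card_boundary[OF assms(2,4-6)] .
  then show ?thesis using card_seteq[OF finD sub] by simp
qed

lemma boundary_subset_side_cut:
  assumes "S \<subseteq> V1" "V1 \<inter> V2 = {}" "\<forall>e \<in> E - D. e \<subseteq> V1 \<or> e \<subseteq> V2"
    and "boundary ({e \<in> E - D. e \<subseteq> V1} - F) S = {}"
  shows "boundary E S \<subseteq> F \<union> D"
proof
  fix e assume "e \<in> boundary E S"
  then have e: "e \<in> E" "e \<inter> S \<noteq> {}" "e - S \<noteq> {}" unfolding boundary_def by auto
  show "e \<in> F \<union> D"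
  proof (rule ccontr)
    assume "e \<notin> F \<union> D"
    moreover have "e \<subseteq> V1" using \<open>e \<notin> F \<union> D\<close> assms(1-3) e(1,2) by blast
    ultimately have "e \<in> boundary ({e \<in> E - D. e \<subseteq> V1} - F) S"
      using e unfolding boundary_def by blast
    with assms(4) show False by simp
  qed
qed

lemma le_card_cover_of_boundary:
  assumes "edge_connectivity V E = enat m" "finite E" "F \<subseteq> E" "D \<subseteq> E"
    and "S \<subseteq> V" "S \<noteq> {}" "S \<noteq> V" "boundary E S \<subseteq> F \<union> D"
  shows "m \<le> card F + card (D \<inter> boundary E S)"
proof -
  have "m \<le> card (boundary E S)" by (rule le_card_boundary[OF assms(1,5-7)])
  also have "\<dots> \<le> card (F \<union> (D \<inter> boundary E S))"
    using assms(2-4,8) by (intro card_mono) (auto intro: finite_subset)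
  also have "\<dots> \<le> card F + card (D \<inter> boundary E S)" by (rule card_Un_le)
  finally show ?thesis .
qed

lemma card_Int_boundary_add_card_Int_boundary_le:
  assumes "graph V E" "finite D" "D \<subseteq> boundary E (A \<union> B)" "A \<inter> B = {}"
  shows "card (D \<inter> boundary E A) + card (D \<inter> boundary E B) \<le> card D"
proof -
  have "(D \<inter> boundary E A) \<inter> (D \<inter> boundary E B) = {}"
    using boundary_Int_boundary_Int_boundary_Un[OF assms(1,4)] assms(3) by blast
  then have "card (D \<inter> boundary E A) + card (D \<inter> boundary E B)
      = card (D \<inter> (boundary E A \<union> boundary E B))"
    using assms(2) by (simp add: card_Un_disjoint Int_Un_distrib)
  also have "\<dots> \<le> card D" using assms(2) by (intro card_mono) auto
  finally show ?thesis .
qed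

lemma side_edge_connectivity_ge_half:
  assumes g: "graph V E" and ec: "edge_connectivity V E = enat (2 * l)"
    and D: "D \<subseteq> E" "card D = 2 * l"
    and V: "V1 \<union> V2 = V" "V1 \<inter> V2 = {}"
    and sep: "\<forall>e \<in> E - D. e \<subseteq> V1 \<or> e \<subseteq> V2"
    and ne: "V1 \<noteq> {}" "V2 \<noteq> {}"
  shows "enat l \<le> edge_connectivity V1 {e \<in> E - D. e \<subseteq> V1}"
proof (rule le_edge_connectivityI)
  fix F
  let ?E1 = "{e \<in> E - D. e \<subseteq> V1}"
  assume F: "F \<subseteq> ?E1" and disconn: "\<not> connected_graph V1 (?E1 - F)"
  have finE: "finite E" using graph_finite_edges[OF g] .
  have "graph V1 (?E1 - F)" by (rule graph_subgraph[OF g]) (use V(1) in auto)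
  then obtain A where A: "A \<subseteq> V1" "A \<noteq> {}" "A \<noteq> V1" and closedA: "boundary (?E1 - F) A = {}"
    using ne(1) disconn by (rule not_connected_graph_obtains_closed_set)
  define B where "B = V1 - A"
  have "\<forall>e \<in> ?E1 - F. e \<subseteq> V1" by blast
  then have closedB: "boundary (?E1 - F) B = {}"
    using closedA unfolding B_def by (simp add: boundary_complement)
  have B: "B \<subseteq> V1" "B \<noteq> {}" "B \<noteq> V1" using A unfolding B_def by auto
  have AB: "A \<inter> B = {}" "A \<union> B = V1" using A(1) unfolding B_def by blast+
  have proper: "S \<subseteq> V" "S \<noteq> V" if "S \<subseteq> V1" for S using that V ne(2) by auto
  have "edge_connectivity V E = enat (card D)" using ec D(2) by simp
  moreover have "\<forall>e \<in> E - D. e \<subseteq> V1 \<or> e \<inter> V1 = {}" using sep V(2) by blast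
  ultimately have "D = boundary E V1"
    using minimum_cut_eq_boundary[OF g _ D(1) proper(1)[OF order_refl] ne(1) proper(2)[OF order_refl]]
    by simp
  then have "D \<subseteq> boundary E (A \<union> B)" unfolding AB(2) by simp
  moreover have "finite D" using D(1) finE by (rule finite_subset)
  ultimately have "card (D \<inter> boundary E A) + card (D \<inter> boundary E B) \<le> card D"
    using card_Int_boundary_add_card_Int_boundary_le[OF g _ _ AB(1)] by blast
  moreover have cut_bound: "2 * l \<le> card F + card (D \<inter> boundary E S)"
    if "S \<subseteq> V1" "S \<noteq> {}" "boundary (?E1 - F) S = {}" for S
    using le_card_cover_of_boundary[OF ec finE _ D(1) proper(1)[OF that(1)] that(2) proper(2)[OF that(1)]]
      boundary_subset_side_cut[OF that(1) V(2) sep that(3)] F by blast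
  ultimately show "l \<le> card F"
    using cut_bound[OF A(1,2) closedA] cut_bound[OF B(1,2) closedB] D(2) by linarith
qed

theorem mainTheorem12:
  fixes V :: "'a set" and E D :: "'a set set" and k l :: nat and V1 V2 :: "'a set"
  assumes "cozy k V E"
    and "edge_connectivity V E = enat (2 * l)"
    and "D \<subseteq> E" and "card D = 2 * l"
    and "V1 \<union> V2 = V" and "V1 \<inter> V2 = {}"
    and "\<forall>e \<in> E - D. e \<subseteq> V1 \<or> e \<subseteq> V2"
    and "connected_graph V1 {e \<in> E - D. e \<subseteq> V1}"
    and "connected_graph V2 {e \<in> E - D. e \<subseteq> V2}"
  shows "edge_connectivity V1 {e \<in> E - D. e \<subseteq> V1} \<ge> enat l
       \<and> edge_connectivity V2 {e \<in> E - D. e \<subseteq> V2} \<ge> enat l"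
proof
  have g: "graph V E" using assms(1) unfolding cozy_def by blast
  have ne: "V1 \<noteq> {}" "V2 \<noteq> {}" using assms(8,9) unfolding connected_graph_def by blast+
  show "edge_connectivity V1 {e \<in> E - D. e \<subseteq> V1} \<ge> enat l"
    using side_edge_connectivity_ge_half[OF g assms(2-7) ne] .
  have "V2 \<union> V1 = V" "V2 \<inter> V1 = {}" "\<forall>e \<in> E - D. e \<subseteq> V2 \<or> e \<subseteq> V1"
    using assms(5-7) by blast+
  then show "edge_connectivity V2 {e \<in> E - D. e \<subseteq> V2} \<ge> enat l"
    using side_edge_connectivity_ge_half[OF g assms(2-4) _ _ _ ne(2,1)] by blast
qed

end
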